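(* Let $\mathbb{K}$ be a semiring. Every unambiguous one-way $\mathbb{K}$-automaton is equivalent to a deterministic two-way $\mathbb{K}$-automaton, i.e. both assign the same weight to every word of $A^*$.
   Context: A semiring $\mathbb{K}$ (not necessarily commutative) has addition $\oplus$ and multiplication $\otimes$ with the usual axioms. A one-way $\mathbb{K}$-automaton $(P,A,G,I',T')$ has finite state set $P$, partial $I',T':P\to\mathbb{K}$ (supports: initial/final states) and partial $G:P\times A\times P\to\mathbb{K}$ (support: transitions); its computations on $w=w_1\cdots w_n$ are paths $(q_0,w_1,q_1)\cdots(q_{n-1},w_n,q_n)$ of transitions from an initial to a final state, with weight $I'(q_0)\otimes G(q_0,w_1,q_1)\otimes\cdots\otimes G(q_{n-1},w_n,q_n)\otimes T'(q_n)$; the weight of $w$ is the sum of these. It is unambiguous if every word labels at most one computation. With $A_{\vdash\dashv}=A\cup\{\vdash,\dashv\}$ ($\vdash,\dashv$ fresh end-markers), a two-way $\mathbb{K}$-automaton $(Q,A,E,I,T)$ has finite state set $Q$, partial $I,T:Q\to\mathbb{K}$, and partial $E:Q\times(A_{\vdash\dashv}\times\{-1,+1\})\times Q\to\mathbb{K}$ whose support (the transitions) contains no $(p,\vdash,-1,q)$ nor $(p,\dashv,+1,q)$; for $t=(p,a,d,q)$: $\sigma(t)=p$, $\tau(t)=q$, $\lambda(t)=a$, $\delta(t)=d$. For $w=w_1\cdots w_n$ set $w_0=\vdash$, $w_{n+1}=\dashv$; a computation on $w$ is a sequence of configurations $((p_0,i_0),\dots,(p_k,i_k))$, $i_j\in[0;n+1]$,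 with $i_0=1$, $i_k=n+1$, $p_0$ initial, $p_k$ final, and transitions $t_j$ with $\sigma(t_j)=p_j$, $\tau(t_j)=p_{j+1}$, $\lambda(t_j)=w_{i_j}$, $i_{j+1}=i_j+\delta(t_j)$; its weight is $I(p_0)\otimes\bigotimes_{j=0}^{k-1}E(t_j)\otimes T(p_k)$, and the weight of $w$ is the sum of the weights of its computations. A two-way automaton is deterministic if (i) it has at most one initial state; (ii) for every state $p$ and every letter $a$ there is at most one transition outgoing from $p$ with label $a$; (iii) for every final state $p$ there is no transition outgoing from $p$ with label $\dashv$. *)

theory Defs
  imports Main
begin

text \<open>Weights live in a semiring, not necessarily commutative:
  type class semiring_0 (commutative monoid for addition, distributivity,
  0 absorbing) together with monoid_mult (associative multiplication with unit).\<close>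

text \<open>A one-way automaton (P, A, G, I', T'); partial maps are rendered with option.\<close>
record ('p, 'a, 'k) oneway =
  states1 :: "'p set"
  init1   :: "'p \<Rightarrow> 'k option"
  fin1    :: "'p \<Rightarrow> 'k option"
  trans1  :: "'p \<Rightarrow> 'a \<Rightarrow> 'p \<Rightarrow> 'k option"

definition wf1 :: "'a set \<Rightarrow> ('p, 'a, 'k) oneway \<Rightarrow> bool" where
  "wf1 A M \<longleftrightarrow> finite (states1 M)
     \<and> (\<forall>q. init1 M q \<noteq> None \<longrightarrow> q \<in> states1 M)
     \<and> (\<forall>q. fin1 M q \<noteq> None \<longrightarrow> q \<in> states1 M)
     \<and> (\<forall>p a q. trans1 M p a q \<noteq> None \<longrightarrow> p \<in> states1 M \<and> a \<in> A \<and> q \<in> states1 M)"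

text \<open>A computation on w = w_1...w_n is the state sequence q_0 ... q_n
  (the transitions (q_{i-1}, w_i, q_i) are determined by it).\<close>
definition comps1 :: "('p, 'a, 'k) oneway \<Rightarrow> 'a list \<Rightarrow> 'p list set" where
  "comps1 M w = {qs. length qs = Suc (length w)
      \<and> init1 M (hd qs) \<noteq> None \<and> fin1 M (last qs) \<noteq> None
      \<and> (\<forall>i < length w. trans1 M (qs ! i) (w ! i) (qs ! Suc i) \<noteq> None)}"

definition cweight1 :: "('p, 'a, 'k::{semiring_0, monoid_mult}) oneway \<Rightarrow> 'a list \<Rightarrow> 'p list \<Rightarrow> 'k" where
  "cweight1 M w qs = the (init1 M (hd qs))
      * prod_list (map (\<lambda>i. the (trans1 M (qs ! i) (w ! i) (qs ! Suc i))) [0..<length w])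
      * the (fin1 M (last qs))"

definition weight1 :: "('p, 'a, 'k::{semiring_0, monoid_mult}) oneway \<Rightarrow> 'a list \<Rightarrow> 'k" where
  "weight1 M w = (\<Sum>qs \<in> comps1 M w. cweight1 M w qs)"

definition unambiguous1 :: "'a set \<Rightarrow> ('p, 'a, 'k) oneway \<Rightarrow> bool" where
  "unambiguous1 A M \<longleftrightarrow> (\<forall>w \<in> lists A. \<forall>c1 \<in> comps1 M w. \<forall>c2 \<in> comps1 M w. c1 = c2)"

datatype 'a marked = LEnd | REnd | Letter 'a

datatype dir = DL | DR

fun dval :: "dir \<Rightarrow> int" where
  "dval DL = -1" | "dval DR = 1"

record ('q, 'a, 'k) twoway =
  states2 :: "'q set"
  init2   :: "'q \<Rightarrow> 'k option"
  fin2    :: "'q \<Rightarrow> 'k option"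
  trans2  :: "'q \<Rightarrow> 'a marked \<Rightarrow> dir \<Rightarrow> 'q \<Rightarrow> 'k option"

definition wf2 :: "'a set \<Rightarrow> ('q, 'a, 'k) twoway \<Rightarrow> bool" where
  "wf2 A B \<longleftrightarrow> finite (states2 B)
     \<and> (\<forall>q. init2 B q \<noteq> None \<longrightarrow> q \<in> states2 B)
     \<and> (\<forall>q. fin2 B q \<noteq> None \<longrightarrow> q \<in> states2 B)
     \<and> (\<forall>p a d q. trans2 B p a d q \<noteq> None \<longrightarrow> p \<in> states2 B \<and> q \<in> states2 B
            \<and> (\<forall>b. a = Letter b \<longrightarrow> b \<in> A))
     \<and> (\<forall>p q. trans2 B p LEnd DL q = None)
     \<and> (\<forall>p q. trans2 B p REnd DR q = None)"

text \<open>The symbol w_i at position i of the marked word (w_0 = left marker, w_{n+1} = right marker).\<close>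
definition tape :: "'a list \<Rightarrow> int \<Rightarrow> 'a marked" where
  "tape w i = (if i = 0 then LEnd else if i = int (length w) + 1 then REnd
               else Letter (w ! nat (i - 1)))"

definition dir_of :: "int \<Rightarrow> dir" where
  "dir_of k = (if k = 1 then DR else DL)"

text \<open>A computation is a list of configurations (p_j, i_j); the transitions
  t_j = (p_j, w_{i_j}, i_{j+1} - i_j, p_{j+1}) are determined by it.\<close>
definition comps2 :: "('q, 'a, 'k) twoway \<Rightarrow> 'a list \<Rightarrow> ('q \<times> int) list set" where
  "comps2 B w = {cs. cs \<noteq> []
      \<and> (\<forall>c \<in> set cs. 0 \<le> snd c \<and> snd c \<le> int (length w) + 1)
      \<and> snd (hd cs) = 1 \<and> snd (last cs) = int (length w) + 1
      \<and> init2 B (fst (hd cs)) \<noteq> None \<and> fin2 B (fst (last cs)) \<noteq> None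
      \<and> (\<forall>j. Suc j < length cs \<longrightarrow> (\<exists>d.
            trans2 B (fst (cs ! j)) (tape w (snd (cs ! j))) d (fst (cs ! Suc j)) \<noteq> None
            \<and> snd (cs ! Suc j) = snd (cs ! j) + dval d))}"

definition cweight2 :: "('q, 'a, 'k::{semiring_0, monoid_mult}) twoway \<Rightarrow> 'a list \<Rightarrow> ('q \<times> int) list \<Rightarrow> 'k" where
  "cweight2 B w cs = the (init2 B (fst (hd cs)))
      * prod_list (map (\<lambda>j. the (trans2 B (fst (cs ! j)) (tape w (snd (cs ! j)))
                          (dir_of (snd (cs ! Suc j) - snd (cs ! j))) (fst (cs ! Suc j))))
                     [0..<length cs - 1])
      * the (fin2 B (fst (last cs)))"

text \<open>Weight of a word: sum over its computations (only meaningful when there are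
  finitely many; the main theorem asserts finiteness explicitly).\<close>
definition weight2 :: "('q, 'a, 'k::{semiring_0, monoid_mult}) twoway \<Rightarrow> 'a list \<Rightarrow> 'k" where
  "weight2 B w = (\<Sum>cs \<in> comps2 B w. cweight2 B w cs)"

definition deterministic2 :: "('q, 'a, 'k) twoway \<Rightarrow> bool" where
  "deterministic2 B \<longleftrightarrow>
     (\<forall>p q. init2 B p \<noteq> None \<longrightarrow> init2 B q \<noteq> None \<longrightarrow> p = q)
     \<and> (\<forall>p a d q d' q'. trans2 B p a d q \<noteq> None \<longrightarrow> trans2 B p a d' q' \<noteq> None
            \<longrightarrow> d = d' \<and> q = q')
     \<and> (\<forall>p d q. fin2 B p \<noteq> None \<longrightarrow> trans2 B p REnd d q = None)"

end

theory Submission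
  imports Defs "HOL-Library.Sublist"
begin

text \<open>The deterministic two-way automaton first walks to the right end-marker and back to the
  left one, computing for every suffix of the input the set of states of M from which that suffix
  is accepted. At the left end-marker it starts in the unique initial state whose set contains it
  and then follows the unique accepting computation of M from left to right, remembering the
  co-accessible set S of the remaining suffix. To choose the successor of the current state it
  needs the co-accessible set r of the next suffix, which is one of the candidates t with
  Pre(t, a) = S but cannot be stored. When there are several candidates it explores to the right,
  keeping for each candidate the sets that propagate back onto it, until only the true candidate
  survives; walking back it follows the images of these families and recognises the position it
  started from as the first place where two of them merge. Unambiguity makes every choice unique, so
  the two-way automaton has exactly one computation on each word accepted by M, of the same weight
  as the unique computation of M, and none on the other words.\<close>

definition moves2 :: "('q, 'a, 'k) twoway \<Rightarrow> 'a list \<Rightarrow> ('q \<times> int) list \<Rightarrow> bool" where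
  "moves2 B w cs \<longleftrightarrow> (\<forall>j. Suc j < length cs \<longrightarrow> (\<exists>d.
      trans2 B (fst (cs ! j)) (tape w (snd (cs ! j))) d (fst (cs ! Suc j)) \<noteq> None
      \<and> snd (cs ! Suc j) = snd (cs ! j) + dval d))"

definition moves_weight2 ::
    "('q, 'a, 'k::{semiring_0, monoid_mult}) twoway \<Rightarrow> 'a list \<Rightarrow> ('q \<times> int) list \<Rightarrow> 'k" where
  "moves_weight2 B w cs = prod_list (map (\<lambda>j. the (trans2 B (fst (cs ! j)) (tape w (snd (cs ! j)))
      (dir_of (snd (cs ! Suc j) - snd (cs ! j))) (fst (cs ! Suc j)))) [0..<length cs - 1])"

lemma comps2_iff:
  "cs \<in> comps2 B w \<longleftrightarrow> cs \<noteq> [] \<and> (\<forall>c \<in> set cs. 0 \<le> snd c \<and> snd c \<le> int (length w) + 1)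
     \<and> snd (hd cs) = 1 \<and> snd (last cs) = int (length w) + 1
     \<and> init2 B (fst (hd cs)) \<noteq> None \<and> fin2 B (fst (last cs)) \<noteq> None \<and> moves2 B w cs"
  unfolding comps2_def moves2_def by blast

lemma cweight2_eq:
  "cweight2 B w cs = the (init2 B (fst (hd cs))) * moves_weight2 B w cs * the (fin2 B (fst (last cs)))"
  unfolding cweight2_def moves_weight2_def ..

lemma moves2_singleton [simp]: "moves2 B w [c]"
  by (simp add: moves2_def)

lemma moves2_Cons_Cons:
  "moves2 B w (c # c' # cs) \<longleftrightarrow>
     (\<exists>d. trans2 B (fst c) (tape w (snd c)) d (fst c') \<noteq> None \<and> snd c' = snd c + dval d)
     \<and> moves2 B w (c' # cs)"
  unfolding moves2_def length_Cons Suc_less_eq All_less_Suc2 by simp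

lemma moves_weight2_singleton [simp]: "moves_weight2 B w [c] = 1"
  by (simp add: moves_weight2_def)

lemma moves_weight2_Cons_Cons:
  "moves_weight2 B w (c # c' # cs) =
     the (trans2 B (fst c) (tape w (snd c)) (dir_of (snd c' - snd c)) (fst c')) * moves_weight2 B w (c' # cs)"
  by (simp add: moves_weight2_def upt_conv_Cons map_Suc_upt[symmetric] comp_def del: upt_Suc)

lemma dir_of_dval [simp]: "dir_of (dval d) = d"
  by (cases d) (auto simp: dir_of_def)

lemma tape_0 [simp]: "tape w 0 = LEnd"
  by (simp add: tape_def)

lemma tape_REnd [simp]: "tape w (int (length w) + 1) = REnd" "tape w (1 + int (length w)) = REnd"
  by (simp_all add: tape_def)

lemma tape_Letter:
  assumes "k < length w"
  shows "tape w (int (Suc k)) = Letter (w ! k)" "tape w (1 + int k) = Letter (w ! k)"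
  using assms by (simp_all add: tape_def)

lemma tape_Letter_in:
  assumes "w \<in> lists A" "0 \<le> i" "i \<le> int (length w) + 1" "tape w i = Letter b"
  shows "b \<in> A"
proof -
  have "nat (i - 1) < length w" "b = w ! nat (i - 1)"
    using assms(2-4) by (auto simp: tape_def split: if_splits)
  then show ?thesis using assms(1) by (metis in_listsD nth_mem)
qed

lemma wf2_move_on_tape:
  assumes "wf2 A B" "trans2 B p (tape w i) d q \<noteq> None" "0 \<le> i" "i \<le> int (length w) + 1"
  shows "0 \<le> i + dval d \<and> i + dval d \<le> int (length w) + 1"
proof -
  have "i = 0 \<Longrightarrow> d = DR" "i = int (length w) + 1 \<Longrightarrow> d = DL"
    using assms(1,2) unfolding wf2_def by (cases d; auto)+
  then show ?thesis using assms(3,4) by (cases d) fastforce+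
qed

inductive reach2 :: "('q, 'a, 'k::{semiring_0, monoid_mult}) twoway \<Rightarrow> 'a list
    \<Rightarrow> 'q \<times> int \<Rightarrow> 'q \<times> int \<Rightarrow> 'k \<Rightarrow> bool"
  for B w where
  refl: "reach2 B w c c 1"
| step: "trans2 B p (tape w i) d p' = Some x \<Longrightarrow> 0 \<le> i \<Longrightarrow> i \<le> int (length w) + 1
    \<Longrightarrow> reach2 B w (p', i + dval d) c y \<Longrightarrow> reach2 B w (p, i) c (x * y)"

lemma reach2_trans: "reach2 B w c1 c2 x \<Longrightarrow> reach2 B w c2 c3 y \<Longrightarrow> reach2 B w c1 c3 (x * y)"
  by (induction rule: reach2.induct) (auto simp: mult.assoc intro: reach2.step)

lemma reach2_imp_moves2:
  assumes "reach2 B w c c' x" "wf2 A B" "0 \<le> snd c" "snd c \<le> int (length w) + 1"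
  shows "\<exists>cs. cs \<noteq> [] \<and> hd cs = c \<and> last cs = c'
    \<and> (\<forall>c \<in> set cs. 0 \<le> snd c \<and> snd c \<le> int (length w) + 1)
    \<and> moves2 B w cs \<and> moves_weight2 B w cs = x"
  using assms
proof (induction rule: reach2.induct)
  case (refl c)
  show ?case by (intro exI[of _ "[c]"]) (use refl in auto)
next
  case (step p i d p' x c y)
  have "0 \<le> i + dval d \<and> i + dval d \<le> int (length w) + 1"
    using wf2_move_on_tape[OF step.prems(1), of p w i d p'] step.hyps by simp
  then obtain cs where cs: "cs \<noteq> []" "hd cs = (p', i + dval d)" "last cs = c"
    "\<forall>c \<in> set cs. 0 \<le> snd c \<and> snd c \<le> int (length w) + 1" "moves2 B w cs" "moves_weight2 B w cs = y"
    using step.IH step.prems by auto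
  then obtain cs' where "cs = (p', i + dval d) # cs'" by (cases cs) auto
  then show ?case
    using cs step.hyps by (intro exI[of _ "(p, i) # cs"]) (auto simp: moves2_Cons_Cons moves_weight2_Cons_Cons)
qed

lemma reach2_imp_comps2:
  assumes "reach2 B w (p, 1) (q, int (length w) + 1) x" "wf2 A B"
    "init2 B p = Some a" "fin2 B q = Some f"
  shows "\<exists>cs \<in> comps2 B w. cweight2 B w cs = a * x * f"
proof -
  obtain cs where "cs \<noteq> []" "hd cs = (p, 1)" "last cs = (q, int (length w) + 1)"
    "\<forall>c \<in> set cs. 0 \<le> snd c \<and> snd c \<le> int (length w) + 1" "moves2 B w cs" "moves_weight2 B w cs = x"
    using reach2_imp_moves2[OF assms(1,2)] by auto
  then show ?thesis using assms(3,4) by (intro bexI[of _ cs]) (auto simp: comps2_iff cweight2_eq)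
qed

lemma deterministic2_moves2_prefix:
  assumes "deterministic2 B" "moves2 B w cs1" "moves2 B w cs2" "hd cs1 = hd cs2" "cs1 \<noteq> []" "cs2 \<noteq> []"
  shows "prefix cs1 cs2 \<or> prefix cs2 cs1"
  using assms(2-)
proof (induction cs1 arbitrary: cs2)
  case Nil
  then show ?case by simp
next
  case (Cons c cs1)
  then obtain cs2' where cs2: "cs2 = c # cs2'" by (cases cs2) auto
  show ?case
  proof (cases "cs1 = [] \<or> cs2' = []")
    case True
    then show ?thesis using cs2 by auto
  next
    case False
    then obtain a b cs1'' cs2'' where ab: "cs1 = a # cs1''" "cs2' = b # cs2''"
      by (meson list.exhaust)
    obtain d d' where
      "trans2 B (fst c) (tape w (snd c)) d (fst a) \<noteq> None" "snd a = snd c + dval d"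
      "trans2 B (fst c) (tape w (snd c)) d' (fst b) \<noteq> None" "snd b = snd c + dval d'"
      "moves2 B w cs1" "moves2 B w cs2'"
      using Cons.prems cs2 ab by (auto simp: moves2_Cons_Cons)
    moreover have "d = d' \<and> fst a = fst b"
      using assms(1) calculation(1,3) unfolding deterministic2_def by blast
    ultimately have "a = b" by (simp add: prod_eq_iff)
    then have "prefix cs1 cs2' \<or> prefix cs2' cs1"
      using \<open>moves2 B w cs1\<close> \<open>moves2 B w cs2'\<close> by (intro Cons.IH) (simp_all add: ab)
    then show ?thesis using cs2 by auto
  qed
qed

lemma moves2_append_Cons:
  "moves2 B w (cs @ c # cs') \<Longrightarrow> cs \<noteq> [] \<Longrightarrow>
     \<exists>d. trans2 B (fst (last cs)) (tape w (snd (last cs))) d (fst c) \<noteq> None"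
  unfolding moves2_def
  by (drule spec[of _ "length cs - 1"]) (auto simp: nth_append last_conv_nth)

lemma deterministic2_comps2_unique:
  assumes "deterministic2 B" "cs1 \<in> comps2 B w" "cs2 \<in> comps2 B w"
  shows "cs1 = cs2"
proof -
  have stop: "False"
    if cs: "cs \<in> comps2 B w" "cs' \<in> comps2 B w" and "prefix cs cs'" "cs \<noteq> cs'" for cs cs'
  proof -
    obtain c cs'' where "cs' = cs @ c # cs''"
      using \<open>prefix cs cs'\<close> \<open>cs \<noteq> cs'\<close> by (metis append.right_neutral neq_Nil_conv prefixE)
    then obtain d where "trans2 B (fst (last cs)) REnd d (fst c) \<noteq> None"
      using moves2_append_Cons[of B w cs c cs''] cs by (auto simp: comps2_iff)
    moreover have "fin2 B (fst (last cs)) \<noteq> None" using cs(1) by (simp add: comps2_iff)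
    ultimately show False using assms(1) unfolding deterministic2_def by metis
  qed
  have "fst (hd cs1) = fst (hd cs2)"
    using assms unfolding comps2_iff deterministic2_def by blast
  then have "prefix cs1 cs2 \<or> prefix cs2 cs1"
    using assms by (intro deterministic2_moves2_prefix) (auto simp: comps2_iff prod_eq_iff)
  then show ?thesis using stop assms(2,3) by blast
qed

lemma moves2_last_invariant:
  assumes "moves2 B w cs" "cs \<noteq> []" "P (hd cs)"
    and step: "\<And>c d p. P c \<Longrightarrow> trans2 B (fst c) (tape w (snd c)) d p \<noteq> None \<Longrightarrow> P (p, snd c + dval d)"
  shows "P (last cs)"
  using assms(1-3)
proof (induction cs rule: induct_list012)
  case (3 c c' cs)
  then obtain d where "trans2 B (fst c) (tape w (snd c)) d (fst c') \<noteq> None" "snd c' = snd c + dval d"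
    by (auto simp: moves2_Cons_Cons)
  moreover have "P c" using 3 by simp
  ultimately have "P c'" using step[of c d "fst c'"] by (metis prod.collapse)
  then show ?case using 3 by (simp add: moves2_Cons_Cons)
qed simp_all

lemma comps2_states2:
  assumes "wf2 A B" "cs \<in> comps2 B w"
  shows "fst ` set cs \<subseteq> states2 B"
proof
  fix p assume "p \<in> fst ` set cs"
  then obtain j where j: "j < length cs" "p = fst (cs ! j)" by (auto simp: in_set_conv_nth)
  have "init2 B p \<noteq> None \<or> (\<exists>j' d. trans2 B (fst (cs ! j')) (tape w (snd (cs ! j'))) d p \<noteq> None)"
    using assms(2) j by (cases j) (auto simp: comps2_iff moves2_def hd_conv_nth)
  then show "p \<in> states2 B" using assms(1) unfolding wf2_def by blast
qed

lemma comps2_map_states: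
  assumes cs: "cs \<in> comps2 B w" "fst ` set cs \<subseteq> Q"
    and "\<forall>p \<in> Q. init2 B' (f p) = init2 B p" "\<forall>p \<in> Q. fin2 B' (f p) = fin2 B p"
    and "\<forall>p \<in> Q. \<forall>q \<in> Q. \<forall>a d. trans2 B' (f p) a d (f q) = trans2 B p a d q"
  shows "map (apfst f) cs \<in> comps2 B' w" "cweight2 B' w (map (apfst f) cs) = cweight2 B w cs"
proof -
  have ne: "cs \<noteq> []" and Q: "\<And>j. j < length cs \<Longrightarrow> fst (cs ! j) \<in> Q"
    using cs by (auto simp: comps2_iff)
  then have ends: "fst (hd cs) \<in> Q" "fst (last cs) \<in> Q"
    by (simp_all add: hd_conv_nth last_conv_nth)
  have "moves2 B' w (map (apfst f) cs) = moves2 B w cs"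
    unfolding moves2_def using Q assms(5) by auto
  moreover have "moves_weight2 B' w (map (apfst f) cs) = moves_weight2 B w cs"
    unfolding moves_weight2_def using Q assms(5) by (auto intro!: arg_cong[where f = prod_list])
  ultimately show "map (apfst f) cs \<in> comps2 B' w" "cweight2 B' w (map (apfst f) cs) = cweight2 B w cs"
    using cs(1) ne ends assms(3,4) by (auto simp: comps2_iff cweight2_eq hd_map last_map)
qed

definition rename2 :: "('q \<Rightarrow> 'r) \<Rightarrow> ('q, 'a, 'k) twoway \<Rightarrow> ('r, 'a, 'k) twoway" where
  "rename2 f B = (let g = inv_into (states2 B) f in
     \<lparr>states2 = f ` states2 B,
      init2 = (\<lambda>n. if n \<in> f ` states2 B then init2 B (g n) else None),
      fin2 = (\<lambda>n. if n \<in> f ` states2 B then fin2 B (g n) else None),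
      trans2 = (\<lambda>n a d m. if n \<in> f ` states2 B \<and> m \<in> f ` states2 B
                          then trans2 B (g n) a d (g m) else None)\<rparr>)"

lemma rename2_simps:
  "states2 (rename2 f B) = f ` states2 B"
  "init2 (rename2 f B) n = (if n \<in> f ` states2 B then init2 B (inv_into (states2 B) f n) else None)"
  "fin2 (rename2 f B) n = (if n \<in> f ` states2 B then fin2 B (inv_into (states2 B) f n) else None)"
  "trans2 (rename2 f B) n a d m = (if n \<in> f ` states2 B \<and> m \<in> f ` states2 B
     then trans2 B (inv_into (states2 B) f n) a d (inv_into (states2 B) f m) else None)"
  by (simp_all add: rename2_def Let_def)

lemma wf2_rename2:
  assumes "wf2 A B"
  shows "wf2 A (rename2 f B)"
proof -
  have "finite (states2 B)"
    and "\<And>p b d q x. trans2 B p (Letter b) d q = Some x \<Longrightarrow> b \<in> A"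
    and "\<And>p q. trans2 B p LEnd DL q = None" "\<And>p q. trans2 B p REnd DR q = None"
    using assms unfolding wf2_def by fastforce+
  then show ?thesis unfolding wf2_def rename2_simps by (auto split: if_splits)
qed

lemma deterministic2_rename2:
  assumes "deterministic2 B"
  shows "deterministic2 (rename2 f B)"
proof -
  let ?g = "inv_into (states2 B) f"
  have "\<And>p q. init2 B p \<noteq> None \<Longrightarrow> init2 B q \<noteq> None \<Longrightarrow> p = q"
    and "\<And>p a d q d' q'. trans2 B p a d q \<noteq> None \<Longrightarrow> trans2 B p a d' q' \<noteq> None \<Longrightarrow> d = d' \<and> q = q'"
    and "\<And>p d q. fin2 B p \<noteq> None \<Longrightarrow> trans2 B p REnd d q = None"
    using assms unfolding deterministic2_def by blast+
  moreover have "\<And>n m. n \<in> f ` states2 B \<Longrightarrow> m \<in> f ` states2 B \<Longrightarrow> ?g n = ?g m \<Longrightarrow> n = m"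
    by (metis f_inv_into_f)
  ultimately show ?thesis
    unfolding deterministic2_def rename2_simps by (simp split: if_splits)
qed

lemma comps2_rename2:
  assumes "wf2 A B" "inj_on f (states2 B)"
  shows "comps2 (rename2 f B) w = map (apfst f) ` comps2 B w"
    and "cs \<in> comps2 B w \<Longrightarrow> cweight2 (rename2 f B) w (map (apfst f) cs) = cweight2 B w cs"
proof -
  let ?g = "inv_into (states2 B) f"
  have to: "map (apfst f) cs \<in> comps2 (rename2 f B) w \<and>
      cweight2 (rename2 f B) w (map (apfst f) cs) = cweight2 B w cs" if "cs \<in> comps2 B w" for cs
    using comps2_map_states[OF that comps2_states2[OF assms(1) that], where B' = "rename2 f B" and f = f]
      assms(2) by (simp add: rename2_simps)
  have pull: "map (apfst ?g) cs \<in> comps2 B w" if "cs \<in> comps2 (rename2 f B) w" for cs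
    using comps2_map_states[OF that comps2_states2[OF wf2_rename2[OF assms(1)] that], where B' = B and f = "?g"]
    by (simp add: rename2_simps)
  have round_trip: "map (apfst f) (map (apfst ?g) cs) = cs" if "cs \<in> comps2 (rename2 f B) w" for cs
    using comps2_states2[OF wf2_rename2[OF assms(1)] that]
    by (induction cs) (auto simp: rename2_simps f_inv_into_f apfst_def map_prod_def split: prod.splits)
  show "comps2 (rename2 f B) w = map (apfst f) ` comps2 B w"
  proof
    show "comps2 (rename2 f B) w \<subseteq> map (apfst f) ` comps2 B w"
      using pull round_trip by (metis rev_image_eqI subsetI)
    show "map (apfst f) ` comps2 B w \<subseteq> comps2 (rename2 f B) w"
      using to by blast
  qed
  show "cs \<in> comps2 B w \<Longrightarrow> cweight2 (rename2 f B) w (map (apfst f) cs) = cweight2 B w cs"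
    using to by blast
qed

lemma weight2_rename2:
  assumes "wf2 A B" "inj_on f (states2 B)"
  shows "weight2 (rename2 f B) w = weight2 B w"
proof -
  have inj: "inj_on (apfst f) {c. fst c \<in> states2 B}"
    using assms(2) by (auto simp: inj_on_def apfst_def map_prod_def)
  have "inj_on (map (apfst f)) (comps2 B w)"
  proof (rule inj_onI)
    fix xs ys assume "xs \<in> comps2 B w" "ys \<in> comps2 B w" "map (apfst f) xs = map (apfst f) ys"
    moreover have "set xs \<union> set ys \<subseteq> {c. fst c \<in> states2 B}"
      using comps2_states2[OF assms(1)] calculation(1,2) by fastforce
    ultimately show "xs = ys"
      using inj_on_map_eq_map inj_on_subset inj by metis
  qed
  then show ?thesis
    unfolding weight2_def comps2_rename2[OF assms] by (simp add: sum.reindex comps2_rename2(2)[OF assms])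
qed

section \<open>Co-accessible states of a one-way automaton\<close>

fun path1 :: "('p, 'a, 'k) oneway \<Rightarrow> 'a list \<Rightarrow> 'p list \<Rightarrow> bool" where
  "path1 M [] [p] = True"
| "path1 M (a # v) (p # c # rest) = (trans1 M p a c \<noteq> None \<and> path1 M v (c # rest))"
| "path1 M _ _ = False"

lemma path1_iff:
  "path1 M v ps \<longleftrightarrow> length ps = Suc (length v)
     \<and> (\<forall>i < length v. trans1 M (ps ! i) (v ! i) (ps ! Suc i) \<noteq> None)"
  by (induction M v ps rule: path1.induct) (auto simp: All_less_Suc2)

lemma path1_Nil_iff: "path1 M [] ps \<longleftrightarrow> (\<exists>p. ps = [p])"
  by (cases ps; cases "tl ps") auto

lemma path1_Cons_iff:
  "path1 M (a # v) ps \<longleftrightarrow>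
     (\<exists>p c rest. ps = p # c # rest \<and> trans1 M p a c \<noteq> None \<and> path1 M v (c # rest))"
  by (cases ps; cases "tl ps") auto

lemma comps1_path1:
  "comps1 M w = {ps. path1 M w ps \<and> init1 M (hd ps) \<noteq> None \<and> fin1 M (last ps) \<noteq> None}"
  unfolding comps1_def path1_iff by auto

lemma path1_not_Nil: "path1 M v ps \<Longrightarrow> ps \<noteq> []"
  by (auto simp: path1_iff)

definition pre1 :: "('p, 'a, 'k) oneway \<Rightarrow> 'p set \<Rightarrow> 'a \<Rightarrow> 'p set" where
  "pre1 M t b = {p \<in> states1 M. \<exists>c\<in>t. trans1 M p b c \<noteq> None}"

fun pre_word :: "('p, 'a, 'k) oneway \<Rightarrow> 'a list \<Rightarrow> 'p set \<Rightarrow> 'p set" where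
  "pre_word M [] t = t"
| "pre_word M (b # v) t = pre1 M (pre_word M v t) b"

definition final_set1 :: "('p, 'a, 'k) oneway \<Rightarrow> 'p set" where
  "final_set1 M = {p \<in> states1 M. fin1 M p \<noteq> None}"

definition coacc :: "('p, 'a, 'k) oneway \<Rightarrow> 'a list \<Rightarrow> 'p set" where
  "coacc M v = pre_word M v (final_set1 M)"

lemma pre1_subset [simp]: "pre1 M t b \<subseteq> states1 M"
  unfolding pre1_def by auto

lemma pre_word_subset: "t \<subseteq> states1 M \<Longrightarrow> pre_word M v t \<subseteq> states1 M"
  by (cases v) (auto simp: pre1_subset)

lemma final_set1_subset [simp]: "final_set1 M \<subseteq> states1 M"
  unfolding final_set1_def by auto

lemma coacc_subset [simp]: "coacc M v \<subseteq> states1 M"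
  unfolding coacc_def by (rule pre_word_subset[OF final_set1_subset])

lemma pre_word_append: "pre_word M (u @ v) t = pre_word M u (pre_word M v t)"
  by (induction u) auto

lemma pre_word_snoc: "pre_word M (u @ [b]) t = pre_word M u (pre1 M t b)"
  by (simp add: pre_word_append)

lemma pre_word_iff_path1:
  assumes wf: "wf1 A M" and t: "t \<subseteq> states1 M"
  shows "p \<in> pre_word M v t \<longleftrightarrow> (\<exists>ps. path1 M v ps \<and> hd ps = p \<and> last ps \<in> t)"
proof (induction v arbitrary: p)
  case Nil
  show ?case
  proof
    assume "p \<in> pre_word M [] t" then show "\<exists>ps. path1 M [] ps \<and> hd ps = p \<and> last ps \<in> t"
      by (intro exI[of _ "[p]"]) simp
  next
    assume "\<exists>ps. path1 M [] ps \<and> hd ps = p \<and> last ps \<in> t"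
    then obtain ps where "path1 M [] ps" "hd ps = p" "last ps \<in> t" by blast
    then show "p \<in> pre_word M [] t" by (auto simp: path1_Nil_iff)
  qed
next
  case (Cons b v)
  show ?case
  proof
    assume "p \<in> pre_word M (b # v) t"
    then obtain c where c: "p \<in> states1 M" "c \<in> pre_word M v t" "trans1 M p b c \<noteq> None"
      by (auto simp: pre1_def)
    then obtain ps where ps: "path1 M v ps" "hd ps = c" "last ps \<in> t" using Cons.IH by blast
    then obtain rest where "ps = c # rest" using path1_not_Nil by (cases ps) auto
    then show "\<exists>ps. path1 M (b # v) ps \<and> hd ps = p \<and> last ps \<in> t"
      using ps c by (intro exI[of _ "p # ps"]) auto
  next
    assume "\<exists>ps. path1 M (b # v) ps \<and> hd ps = p \<and> last ps \<in> t"
    then obtain ps where ps: "path1 M (b # v) ps" "hd ps = p" "last ps \<in> t" by blast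
    then obtain c rest where e: "ps = p # c # rest" by (auto simp: path1_Cons_iff)
    then have "trans1 M p b c \<noteq> None" "path1 M v (c # rest)" using ps by auto
    moreover have "p \<in> states1 M" using wf \<open>trans1 M p b c \<noteq> None\<close> unfolding wf1_def by blast
    moreover have "c \<in> pre_word M v t" using Cons.IH \<open>path1 M v (c # rest)\<close> ps(3) e by fastforce
    ultimately show "p \<in> pre_word M (b # v) t" by (auto simp: pre1_def)
  qed
qed

lemma coacc_iff_path1:
  assumes wf: "wf1 A M"
  shows "p \<in> coacc M v \<longleftrightarrow> (\<exists>ps. path1 M v ps \<and> hd ps = p \<and> fin1 M (last ps) \<noteq> None)"
proof -
  have "\<And>q. fin1 M q \<noteq> None \<Longrightarrow> q \<in> states1 M" using wf unfolding wf1_def by blast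
  then show ?thesis
    unfolding coacc_def pre_word_iff_path1[OF wf final_set1_subset] by (auto simp: final_set1_def)
qed

lemma path1_append:
  "path1 M u xs \<Longrightarrow> path1 M v ys \<Longrightarrow> last xs = hd ys \<Longrightarrow> path1 M (u @ v) (xs @ tl ys)"
proof (induction u arbitrary: xs)
  case Nil
  then obtain x where "xs = [x]" by (auto simp: path1_Nil_iff)
  then show ?case using Nil path1_not_Nil[OF Nil(2)] by (cases ys) auto
next
  case (Cons a u)
  then obtain p c rest where e: "xs = p # c # rest" by (auto simp: path1_Cons_iff)
  have "path1 M (u @ v) ((c # rest) @ tl ys)"
    by (rule Cons.IH) (use Cons.prems e in auto)
  then show ?case using Cons.prems e by auto
qed

lemma path1_take: "path1 M v ps \<Longrightarrow> k \<le> length v \<Longrightarrow> path1 M (take k v) (take (Suc k) ps)"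
  unfolding path1_iff by (simp add: min_def)

lemma path1_drop: "path1 M v ps \<Longrightarrow> k \<le> length v \<Longrightarrow> path1 M (drop k v) (drop k ps)"
  unfolding path1_iff by (simp add: add.commute)

lemma init_notin_coacc:
  assumes "wf1 A M" "comps1 M w = {}" "init1 M q \<noteq> None"
  shows "q \<notin> coacc M w"
  using assms unfolding coacc_iff_path1[OF assms(1)] comps1_path1 by auto

lemma coacc_drop:
  "k < length w \<Longrightarrow> coacc M (drop k w) = pre1 M (coacc M (drop (Suc k) w)) (w ! k)"
  unfolding coacc_def by (simp add: Cons_nth_drop_Suc[symmetric])

locale unambiguous_run =
  fixes A :: "'a set" and M :: "('p, 'a, 'k::{semiring_0, monoid_mult}) oneway"
    and w :: "'a list" and qs :: "'p list"
  assumes wf: "wf1 A M" and un: "unambiguous1 A M" and w: "w \<in> lists A"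
    and qs: "qs \<in> comps1 M w"
begin

lemma comps1_unique: "ps \<in> comps1 M w \<Longrightarrow> ps = qs"
  using un w qs unfolding unambiguous1_def by blast

lemma run_path1: "path1 M w qs" and run_length: "length qs = Suc (length w)"
  and run_init: "init1 M (hd qs) \<noteq> None" and run_fin: "fin1 M (last qs) \<noteq> None"
  using qs unfolding comps1_path1 by (auto simp: path1_iff)

lemma run_trans: "k < length w \<Longrightarrow> trans1 M (qs ! k) (w ! k) (qs ! Suc k) \<noteq> None"
  using qs unfolding comps1_def by blast

lemma run_in_coacc: "k \<le> length w \<Longrightarrow> qs ! k \<in> coacc M (drop k w)"
proof -
  assume k: "k \<le> length w"
  have "path1 M (drop k w) (drop k qs)" using path1_drop[OF run_path1 k] .
  moreover have "hd (drop k qs) = qs ! k" using k run_length by (simp add: hd_drop_conv_nth)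
  moreover have "last (drop k qs) = last qs" using k run_length by simp
  ultimately show ?thesis
    unfolding coacc_iff_path1[OF wf] using run_fin by (intro exI[of _ "drop k qs"]) simp
qed

lemma run_in_states1: "k \<le> length w \<Longrightarrow> qs ! k \<in> states1 M"
  using run_in_coacc[of k] coacc_subset[of M "drop k w"] by blast

lemma coacc_init_unique: "init1 M q \<noteq> None \<Longrightarrow> q \<in> coacc M w \<Longrightarrow> q = qs ! 0"
proof -
  assume a: "init1 M q \<noteq> None" "q \<in> coacc M w"
  obtain ps where ps: "path1 M w ps" "hd ps = q" "fin1 M (last ps) \<noteq> None"
    using a(2) unfolding coacc_iff_path1[OF wf] by blast
  then have "ps \<in> comps1 M w" using a(1) unfolding comps1_path1 by auto
  then have "ps = qs" by (rule comps1_unique)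
  then show ?thesis using ps(2) run_length by (cases qs) auto
qed

text \<open>Splicing an accepting path from c behind the first k + 1 states of the run gives a
  computation on w, which must be the run itself.\<close>

lemma coacc_succ_unique:
  assumes k: "k < length w"
    and c: "trans1 M (qs ! k) (w ! k) c \<noteq> None" "c \<in> coacc M (drop (Suc k) w)"
  shows "c = qs ! Suc k"
proof -
  obtain ps' where ps': "path1 M (drop (Suc k) w) ps'" "hd ps' = c" "fin1 M (last ps') \<noteq> None"
    using c(2) unfolding coacc_iff_path1[OF wf] by blast
  obtain rest where e: "ps' = c # rest" using path1_not_Nil[OF ps'(1)] ps'(2) by (cases ps') auto
  have m1: "path1 M (take k w) (take (Suc k) qs)" using path1_take[OF run_path1] k by simp
  have m2: "path1 M (w ! k # drop (Suc k) w) (qs ! k # ps')" using e ps'(1) c(1) by simp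
  have l1: "last (take (Suc k) qs) = qs ! k" using k run_length by (simp add: take_Suc_conv_app_nth)
  have "path1 M (take k w @ w ! k # drop (Suc k) w) (take (Suc k) qs @ ps')"
    using path1_append[OF m1 m2] l1 by simp
  moreover have "take k w @ w ! k # drop (Suc k) w = w" using k by (metis id_take_nth_drop)
  ultimately have mp: "path1 M w (take (Suc k) qs @ ps')" by simp
  have "hd (take (Suc k) qs @ ps') = hd qs" using run_length by (cases qs) auto
  moreover have "last (take (Suc k) qs @ ps') = last ps'" using e by simp
  ultimately have "take (Suc k) qs @ ps' \<in> comps1 M w"
    using mp run_init ps'(3) unfolding comps1_path1 by auto
  then have "take (Suc k) qs @ ps' = qs" by (rule comps1_unique)
  then have "qs ! Suc k = (take (Suc k) qs @ ps') ! Suc k" by simp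
  also have "\<dots> = c" using e k run_length by (simp add: nth_append)
  finally show ?thesis by simp
qed

end

section \<open>The simulating two-way automaton\<close>

text \<open>In Run q S the simulated state of M is q and S is the set of states accepting the rest of
  the input; Explore and Return are the detour that determines the co-accessible set of the next
  suffix, T and U mapping each candidate for it to a family of sets.\<close>

datatype 'p sim_state = Forward | Backward "'p set" | Run 'p "'p set"
  | Explore 'p "'p set \<Rightarrow> 'p set set" | Return 'p "'p set" "'p set \<Rightarrow> 'p set set"

definition pre1_candidates :: "('p, 'a, 'k) oneway \<Rightarrow> 'p set \<Rightarrow> 'a \<Rightarrow> 'p set set" where
  "pre1_candidates M S b = {s. s \<subseteq> states1 M \<and> pre1 M s b = S}"

definition advance ::
    "('p, 'a, 'k) oneway \<Rightarrow> 'p \<Rightarrow> 'a \<Rightarrow> 'p set \<Rightarrow> (dir \<times> 'p sim_state \<times> 'k) option" where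
  "advance M q b s = (if \<exists>!c. trans1 M q b c \<noteq> None \<and> c \<in> s
      then (let c = THE c. trans1 M q b c \<noteq> None \<and> c \<in> s in Some (DR, Run c s, the (trans1 M q b c)))
      else None)"

definition explore_step ::
    "('p, 'a, 'k) oneway \<Rightarrow> ('p set \<Rightarrow> 'p set set) \<Rightarrow> 'a \<Rightarrow> 'p set \<Rightarrow> 'p set set" where
  "explore_step M T b = (\<lambda>s. {t. t \<subseteq> states1 M \<and> pre1 M t b \<in> T s})"

definition return_step ::
    "('p, 'a, 'k) oneway \<Rightarrow> ('p set \<Rightarrow> 'p set set) \<Rightarrow> 'a \<Rightarrow> 'p set \<Rightarrow> 'p set set" where
  "return_step M U b = (\<lambda>s. (\<lambda>t. pre1 M t b) ` U s)"

definition two_live :: "('p set \<Rightarrow> 'p set set) \<Rightarrow> bool" where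
  "two_live T = (\<exists>s1 s2. s1 \<noteq> s2 \<and> T s1 \<noteq> {} \<and> T s2 \<noteq> {})"

definition merges :: "('p set \<Rightarrow> 'p set set) \<Rightarrow> bool" where
  "merges U = (\<exists>s1 s2. s1 \<noteq> s2 \<and> U s1 \<inter> U s2 \<noteq> {})"

fun sim_move :: "('p, 'a, 'k::{semiring_0, monoid_mult}) oneway \<Rightarrow> 'p sim_state \<Rightarrow> 'a marked
    \<Rightarrow> (dir \<times> 'p sim_state \<times> 'k) option" where
  "sim_move M Forward (Letter b) = Some (DR, Forward, 1)"
| "sim_move M Forward REnd = Some (DL, Backward (final_set1 M), 1)"
| "sim_move M (Backward S) (Letter b) = Some (DL, Backward (pre1 M S b), 1)"
| "sim_move M (Backward S) LEnd = (if \<exists>!q. init1 M q \<noteq> None \<and> q \<in> S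
      then (let q = THE q. init1 M q \<noteq> None \<and> q \<in> S in Some (DR, Run q S, the (init1 M q)))
      else None)"
| "sim_move M (Run q S) (Letter b) =
     (if \<exists>s1 s2. s1 \<in> pre1_candidates M S b \<and> s2 \<in> pre1_candidates M S b \<and> s1 \<noteq> s2
      then Some (DR, Explore q (\<lambda>s. if s \<in> pre1_candidates M S b then {s} else {}), 1)
      else if \<exists>s. pre1_candidates M S b = {s}
      then advance M q b (THE s. pre1_candidates M S b = {s}) else None)"
| "sim_move M (Explore q T) (Letter b) =
     (if two_live (explore_step M T b) then Some (DR, Explore q (explore_step M T b), 1)
      else if \<exists>!s. explore_step M T b s \<noteq> {}
      then Some (DL, Return q (THE s. explore_step M T b s \<noteq> {}) T, 1) else None)"
| "sim_move M (Explore q T) REnd =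
     (if \<exists>!s. final_set1 M \<in> T s then Some (DL, Return q (THE s. final_set1 M \<in> T s) T, 1) else None)"
| "sim_move M (Return q r U) (Letter b) =
     (if merges (return_step M U b) then advance M q b r
      else Some (DL, Return q r (return_step M U b), 1))"
| "sim_move M _ _ = None"

definition valid_family :: "('p, 'a, 'k) oneway \<Rightarrow> ('p set \<Rightarrow> 'p set set) \<Rightarrow> bool" where
  "valid_family M T \<longleftrightarrow> (\<forall>s. T s \<subseteq> Pow (states1 M) \<and> (\<not> s \<subseteq> states1 M \<longrightarrow> T s = {}))"

fun valid_sim :: "('p, 'a, 'k) oneway \<Rightarrow> 'p sim_state \<Rightarrow> bool" where
  "valid_sim M Forward = True"
| "valid_sim M (Backward S) = (S \<subseteq> states1 M)"
| "valid_sim M (Run q S) = (q \<in> states1 M \<and> S \<subseteq> states1 M)"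
| "valid_sim M (Explore q T) = (q \<in> states1 M \<and> valid_family M T)"
| "valid_sim M (Return q r U) = (q \<in> states1 M \<and> r \<subseteq> states1 M \<and> valid_family M U)"

definition sim2 ::
    "'a set \<Rightarrow> ('p, 'a, 'k::{semiring_0, monoid_mult}) oneway \<Rightarrow> ('p sim_state, 'a, 'k) twoway" where
  "sim2 A M = \<lparr>states2 = {x. valid_sim M x},
     init2 = (\<lambda>x. if x = Forward then Some 1 else None),
     fin2 = (\<lambda>x. if valid_sim M x then (case x of Run q S \<Rightarrow> fin1 M q | _ \<Rightarrow> None) else None),
     trans2 = (\<lambda>x a d y. if valid_sim M x \<and> valid_sim M y \<and> (\<forall>b. a = Letter b \<longrightarrow> b \<in> A)
        then (case sim_move M x a of
                Some (d', y', k) \<Rightarrow> if d = d' \<and> y = y' then Some k else None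
              | None \<Rightarrow> None)
        else None)\<rparr>"

lemma sim2_simps:
  "states2 (sim2 A M) = {x. valid_sim M x}"
  "init2 (sim2 A M) x = (if x = Forward then Some 1 else None)"
  "fin2 (sim2 A M) x = (if valid_sim M x then (case x of Run q S \<Rightarrow> fin1 M q | _ \<Rightarrow> None) else None)"
  "trans2 (sim2 A M) x a d y = (if valid_sim M x \<and> valid_sim M y \<and> (\<forall>b. a = Letter b \<longrightarrow> b \<in> A)
     then (case sim_move M x a of
             Some (d', y', k) \<Rightarrow> if d = d' \<and> y = y' then Some k else None
           | None \<Rightarrow> None)
     else None)"
  unfolding sim2_def by simp_all

lemma the_unique_live:
  assumes "T s0 \<noteq> {}" "\<not> two_live T"
  shows "\<exists>!s. T s \<noteq> {}" "(THE s. T s \<noteq> {}) = s0"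
proof -
  have unique: "s = s0" if "T s \<noteq> {}" for s
    using assms that unfolding two_live_def by blast
  show "\<exists>!s. T s \<noteq> {}" by (intro ex1I[of _ s0] assms(1) unique)
  show "(THE s. T s \<noteq> {}) = s0" by (intro the_equality assms(1) unique)
qed

lemma valid_family_mono: "valid_family M T \<Longrightarrow> (\<And>s. U s \<subseteq> T s) \<Longrightarrow> valid_family M U"
  unfolding valid_family_def by blast

lemma finite_valid_family:
  assumes "finite (states1 M)"
  shows "finite {T. valid_family M T}"
proof -
  let ?P = "Pow (states1 M)"
  have "{T. valid_family M T} \<subseteq> {T. \<forall>s. (s \<in> ?P \<longrightarrow> T s \<in> Pow ?P) \<and> (s \<notin> ?P \<longrightarrow> T s = {})}"
    unfolding valid_family_def by auto
  moreover have "finite {T. \<forall>s. (s \<in> ?P \<longrightarrow> T s \<in> Pow ?P) \<and> (s \<notin> ?P \<longrightarrow> T s = {})}"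
    by (rule finite_set_of_finite_funs) (use assms in auto)
  ultimately show ?thesis by (rule finite_subset)
qed

lemma finite_valid_sim:
  assumes "finite (states1 M)"
  shows "finite {x. valid_sim M x}"
proof -
  let ?S = "states1 M" and ?G = "{T. valid_family M T}"
  let ?X = "{Forward} \<union> Backward ` Pow ?S \<union> case_prod Run ` (?S \<times> Pow ?S)
    \<union> case_prod Explore ` (?S \<times> ?G) \<union> (\<lambda>(q, r, U). Return q r U) ` (?S \<times> Pow ?S \<times> ?G)"
  have "{x. valid_sim M x} \<subseteq> ?X"
  proof
    fix x assume "x \<in> {x. valid_sim M x}"
    then show "x \<in> ?X" by (cases x) (auto simp: image_iff)
  qed
  moreover have "finite ?X"
    using assms finite_valid_family[OF assms] by simp
  ultimately show ?thesis by (rule finite_subset)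
qed

lemma sim_move_LEnd: "sim_move M x LEnd = Some (d, y, k) \<Longrightarrow> d = DR"
  by (cases x) (auto simp: Let_def split: if_splits)

lemma sim_move_REnd: "sim_move M x REnd = Some (d, y, k) \<Longrightarrow> d = DL"
  by (cases x) (auto simp: Let_def split: if_splits)

lemma wf2_sim2:
  assumes "wf1 A M"
  shows "wf2 A (sim2 A M)"
proof -
  have "finite {x. valid_sim M x}"
    using assms finite_valid_sim unfolding wf1_def by blast
  moreover have "trans2 (sim2 A M) p LEnd DL q = None" "trans2 (sim2 A M) p REnd DR q = None" for p q
    using sim_move_LEnd[of M p] sim_move_REnd[of M p] unfolding sim2_simps by (auto split: option.splits)
  ultimately show ?thesis
    unfolding wf2_def sim2_simps(1-3) by (auto simp: sim2_simps split: if_splits)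
qed

lemma deterministic2_sim2: "deterministic2 (sim2 A M)"
  unfolding deterministic2_def sim2_simps
  by (auto split: if_splits option.splits sim_state.splits)

lemma trans2_sim2_imp_sim_move:
  "trans2 (sim2 A M) p a d q \<noteq> None \<Longrightarrow> \<exists>x. sim_move M p a = Some (d, q, x)"
  unfolding sim2_simps by (auto split: if_splits option.splits)

lemma reach2_sim2_move:
  assumes "reach2 (sim2 A M) w (p', j) c y" "sim_move M p (tape w i) = Some (d, p', x)"
    "j = i + dval d" "z = x * y" "valid_sim M p" "valid_sim M p'"
    "w \<in> lists A" "0 \<le> i" "i \<le> int (length w) + 1"
  shows "reach2 (sim2 A M) w (p, i) c z"
proof -
  have "\<forall>b. tape w i = Letter b \<longrightarrow> b \<in> A" using tape_Letter_in[OF assms(7-9)] by blast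
  then have "trans2 (sim2 A M) p (tape w i) d p' = Some x"
    using assms(2,5,6) unfolding sim2_simps by simp
  then show ?thesis using reach2.step[OF _ assms(8,9)] assms(1,3,4) by simp
qed

section \<open>Words accepted by the one-way automaton\<close>

context unambiguous_run
begin

abbreviation "n \<equiv> length w"

lemma valid_sim_Run [simp]: "k \<le> n \<Longrightarrow> valid_sim M (Run (qs ! k) (coacc M (drop k w)))"
  using run_in_states1 coacc_subset by simp

lemma reach_forward:
  assumes "1 \<le> k" "k \<le> Suc n"
  shows "reach2 (sim2 A M) w (Forward, int k) (Forward, int (Suc n)) 1"
  using assms(2,1)
proof (induction k rule: inc_induct)
  case base
  show ?case by (rule reach2.refl)
next
  case (step m)
  then obtain m' where m': "m = Suc m'" "m' < n" by (cases m) auto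
  show ?case
  proof (rule reach2_sim2_move[where d = DR and p' = Forward and x = 1 and y = 1 and j = "int (Suc m)"])
    show "sim_move M Forward (tape w (int m)) = Some (DR, Forward, 1)"
      using m' by (simp add: tape_Letter)
  qed (use w step in auto)
qed

lemma reach_backward:
  assumes "k \<le> n"
  shows "reach2 (sim2 A M) w (Backward (coacc M (drop k w)), int k) (Backward (coacc M w), 0) 1"
  using assms
proof (induction k)
  case 0
  then show ?case using reach2.refl by simp
next
  case (Suc k)
  show ?case
  proof (rule reach2_sim2_move[where d = DL and p' = "Backward (coacc M (drop k w))"
        and x = 1 and y = 1 and j = "int k"])
    show "sim_move M (Backward (coacc M (drop (Suc k) w))) (tape w (int (Suc k)))
        = Some (DL, Backward (coacc M (drop k w)), 1)"
      using Suc.prems by (simp add: tape_Letter coacc_drop)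
  qed (use w Suc in auto)
qed

lemma reach_start:
  "reach2 (sim2 A M) w (Backward (coacc M w), 0) (Run (qs ! 0) (coacc M w), 1) (the (init1 M (qs ! 0)))"
proof -
  have q0: "init1 M (qs ! 0) \<noteq> None \<and> qs ! 0 \<in> coacc M w"
    using run_init run_in_coacc[of 0] run_length by (cases qs) auto
  have ex: "\<exists>!q. init1 M q \<noteq> None \<and> q \<in> coacc M w"
    using q0 coacc_init_unique by blast
  have th: "(THE q. init1 M q \<noteq> None \<and> q \<in> coacc M w) = qs ! 0"
    using q0 coacc_init_unique by blast
  show ?thesis
  proof (rule reach2_sim2_move[where d = DR and p' = "Run (qs ! 0) (coacc M w)" and y = 1 and j = 1])
    show "sim_move M (Backward (coacc M w)) (tape w 0)
        = Some (DR, Run (qs ! 0) (coacc M w), the (init1 M (qs ! 0)))"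
      using ex th by (simp add: Let_def)
    show "valid_sim M (Run (qs ! 0) (coacc M w))" using valid_sim_Run[of 0] by simp
  qed (use w reach2.refl in auto)
qed

definition run_weight :: "nat \<Rightarrow> 'k" where
  "run_weight k = the (trans1 M (qs ! k) (w ! k) (qs ! Suc k))"

lemma advance_run:
  assumes k: "k < n"
  shows "advance M (qs ! k) (w ! k) (coacc M (drop (Suc k) w))
    = Some (DR, Run (qs ! Suc k) (coacc M (drop (Suc k) w)), run_weight k)"
proof -
  let ?r = "coacc M (drop (Suc k) w)"
  have c: "trans1 M (qs ! k) (w ! k) (qs ! Suc k) \<noteq> None \<and> qs ! Suc k \<in> ?r"
    using run_trans[OF k] run_in_coacc[of "Suc k"] k by simp
  have ex: "\<exists>!c. trans1 M (qs ! k) (w ! k) c \<noteq> None \<and> c \<in> ?r"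
    using c coacc_succ_unique[OF k] by blast
  have th: "(THE c. trans1 M (qs ! k) (w ! k) c \<noteq> None \<and> c \<in> ?r) = qs ! Suc k"
    using c coacc_succ_unique[OF k] by blast
  show ?thesis unfolding advance_def using ex th by (simp add: Let_def run_weight_def)
qed

end

text \<open>Letter w ! k sits at tape position k + 1. The family explore_family j s consists of the
  sets at position j that propagate back to the candidate s; families of distinct candidates are
  disjoint, so the exploration stops once a single one survives, which is necessarily that of r,
  and on the way back two images first merge at position k + 1, where all candidates map to S.\<close>

locale unambiguous_run_step = unambiguous_run +
  fixes k :: nat
  assumes k: "k < length w"
begin

definition "S = coacc M (drop k w)"
definition "r = coacc M (drop (Suc k) w)"
definition "cands = pre1_candidates M S (w ! k)"
definition "seg j = take (j - Suc k) (drop (Suc k) w)"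
definition "explore_family j =
  (\<lambda>s. if s \<in> cands then {t. t \<subseteq> states1 M \<and> pre_word M (seg j) t = s} else {})"

lemma r_in_cands: "r \<in> cands"
  unfolding cands_def pre1_candidates_def r_def S_def using coacc_drop[OF k, of M] by simp

lemma seg_Suc:
  assumes "Suc k \<le> j" "j < n"
  shows "seg (Suc j) = seg j @ [w ! j]"
proof -
  have "j - Suc k < length (drop (Suc k) w)" using assms by simp
  then have "take (Suc (j - Suc k)) (drop (Suc k) w)
      = take (j - Suc k) (drop (Suc k) w) @ [drop (Suc k) w ! (j - Suc k)]"
    by (rule take_Suc_conv_app_nth)
  moreover have "Suc j - Suc k = Suc (j - Suc k)" "drop (Suc k) w ! (j - Suc k) = w ! j"
    using assms by simp_all
  ultimately show ?thesis unfolding seg_def by simp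
qed

lemma seg_append_drop: "Suc k \<le> j \<Longrightarrow> j \<le> n \<Longrightarrow> seg j @ drop j w = drop (Suc k) w"
  unfolding seg_def by (metis append_take_drop_id drop_drop le_add_diff_inverse2)

lemma explore_family_start: "explore_family (Suc k) = (\<lambda>s. if s \<in> cands then {s} else {})"
  by (rule ext) (auto simp: explore_family_def seg_def cands_def pre1_candidates_def)

lemma explore_step_explore_family:
  assumes "Suc k \<le> j" "j < n"
  shows "explore_step M (explore_family j) (w ! j) = explore_family (Suc j)"
  by (rule ext) (auto simp: explore_step_def explore_family_def seg_Suc[OF assms] pre_word_snoc)

lemma coacc_in_explore_family:
  assumes "Suc k \<le> j" "j \<le> n"
  shows "coacc M (drop j w) \<in> explore_family j r"
proof -
  have "pre_word M (seg j) (coacc M (drop j w)) = r"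
    unfolding r_def coacc_def pre_word_append[symmetric] seg_append_drop[OF assms] ..
  then show ?thesis unfolding explore_family_def using r_in_cands coacc_subset by simp
qed

lemma explore_family_disjoint: "t \<in> explore_family j s1 \<Longrightarrow> t \<in> explore_family j s2 \<Longrightarrow> s1 = s2"
  unfolding explore_family_def by (auto split: if_splits)

lemma valid_family_explore_family [simp]: "valid_family M (explore_family j)"
  unfolding valid_family_def explore_family_def cands_def pre1_candidates_def by auto

lemma run_states_step [simp]: "qs ! k \<in> states1 M" "qs ! Suc k \<in> states1 M"
  using k run_in_states1[of k] run_in_states1[of "Suc k"] by simp_all

lemma S_r_subset [simp]: "S \<subseteq> states1 M" "r \<subseteq> states1 M"
  by (simp_all add: S_def r_def)

lemma valid_sim_Return:
  assumes "\<And>s. U s \<subseteq> explore_family j s"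
  shows "valid_sim M (Return (qs ! k) r U)"
proof -
  have "valid_family M U" by (rule valid_family_mono[OF valid_family_explore_family assms])
  then show ?thesis by simp
qed

lemma reach_explore:
  assumes "j \<le> n" "Suc k \<le> j" "two_live (explore_family j)"
  shows "\<exists>m. Suc k \<le> m \<and> m \<le> n \<and> two_live (explore_family m)
     \<and> reach2 (sim2 A M) w (Explore (qs ! k) (explore_family j), int (Suc j))
         (Return (qs ! k) r (explore_family m), int m) 1"
  using assms
proof (induction j rule: inc_induct)
  case base
  have inr: "final_set1 M \<in> explore_family n r"
    using coacc_in_explore_family[of n] base k by (simp add: coacc_def)
  have ex: "\<exists>!s. final_set1 M \<in> explore_family n s"
    by (intro ex1I[of _ r] inr) (rule explore_family_disjoint[OF _ inr])
  have th: "(THE s. final_set1 M \<in> explore_family n s) = r"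
    by (intro the_equality inr) (rule explore_family_disjoint[OF _ inr])
  have "reach2 (sim2 A M) w (Explore (qs ! k) (explore_family n), int (Suc n))
      (Return (qs ! k) r (explore_family n), int n) 1"
  proof (rule reach2_sim2_move[where d = DL and p' = "Return (qs ! k) r (explore_family n)"
        and x = 1 and y = 1 and j = "int n"])
    show "sim_move M (Explore (qs ! k) (explore_family n)) (tape w (int (Suc n)))
        = Some (DL, Return (qs ! k) r (explore_family n), 1)"
      using ex th by simp
  qed (use w reach2.refl in auto)
  then show ?case using base by blast
next
  case (step m)
  have tp: "tape w (int (Suc m)) = Letter (w ! m)" using step.hyps by (simp add: tape_Letter)
  have e1: "explore_step M (explore_family m) (w ! m) = explore_family (Suc m)"
    using explore_step_explore_family step.hyps step.prems by simp
  show ?case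
  proof (cases "two_live (explore_family (Suc m))")
    case True
    obtain m2 where m2: "Suc k \<le> m2" "m2 \<le> n" "two_live (explore_family m2)"
      "reach2 (sim2 A M) w (Explore (qs ! k) (explore_family (Suc m)), int (Suc (Suc m)))
         (Return (qs ! k) r (explore_family m2), int m2) 1"
      using step.IH step.prems True by auto
    have "reach2 (sim2 A M) w (Explore (qs ! k) (explore_family m), int (Suc m))
        (Return (qs ! k) r (explore_family m2), int m2) 1"
    proof (rule reach2_sim2_move[where d = DR and p' = "Explore (qs ! k) (explore_family (Suc m))"
          and x = 1 and y = 1 and j = "int (Suc (Suc m))"])
      show "sim_move M (Explore (qs ! k) (explore_family m)) (tape w (int (Suc m)))
          = Some (DR, Explore (qs ! k) (explore_family (Suc m)), 1)"
        using tp e1 True by simp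
    qed (use w m2 step.hyps in auto)
    then show ?thesis using m2 by blast
  next
    case False
    have "explore_family (Suc m) r \<noteq> {}"
      using coacc_in_explore_family[of "Suc m"] step.hyps step.prems by auto
    note unique = the_unique_live[OF this False]
    have "reach2 (sim2 A M) w (Explore (qs ! k) (explore_family m), int (Suc m))
        (Return (qs ! k) r (explore_family m), int m) 1"
    proof (rule reach2_sim2_move[where d = DL and p' = "Return (qs ! k) r (explore_family m)"
          and x = 1 and y = 1 and j = "int m"])
      show "sim_move M (Explore (qs ! k) (explore_family m)) (tape w (int (Suc m)))
          = Some (DL, Return (qs ! k) r (explore_family m), 1)"
        using tp e1 False unique by simp
    qed (use w step.hyps reach2.refl in auto)
    then show ?thesis using step.hyps step.prems by (intro exI[of _ m]) simp
  qed
qed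

lemma return_step_subfamily:
  assumes "Suc k \<le> j" "j < n" "\<And>s. U s \<subseteq> explore_family (Suc j) s"
  shows "return_step M U (w ! j) s \<subseteq> explore_family j s"
proof
  fix x assume "x \<in> return_step M U (w ! j) s"
  then obtain t where t: "t \<in> U s" "x = pre1 M t (w ! j)" unfolding return_step_def by blast
  then have "t \<in> explore_family (Suc j) s" using assms(3) by blast
  then show "x \<in> explore_family j s"
    using t unfolding explore_family_def seg_Suc[OF assms(1,2)]
    by (auto simp: pre_word_snoc split: if_splits)
qed

lemma merges_return_step_start:
  assumes "\<And>s. U s \<subseteq> explore_family (Suc k) s" "two_live U"
  shows "merges (return_step M U (w ! k))"
proof -
  obtain s1 s2 where s: "s1 \<noteq> s2" "U s1 \<noteq> {}" "U s2 \<noteq> {}"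
    using assms(2) unfolding two_live_def by blast
  have U: "s \<in> cands \<and> U s = {s}" if "U s \<noteq> {}" for s
    using assms(1)[of s] that explore_family_start by (auto split: if_splits)
  have "pre1 M s (w ! k) = S" if "s \<in> cands" for s
    using that unfolding cands_def pre1_candidates_def by simp
  then have "return_step M U (w ! k) s1 \<inter> return_step M U (w ! k) s2 \<noteq> {}"
    using U[OF s(2)] U[OF s(3)] unfolding return_step_def by simp
  then show ?thesis using s(1) unfolding merges_def by blast
qed

lemma reach_return:
  assumes "Suc k \<le> j" "j \<le> n" "\<And>s. U s \<subseteq> explore_family j s" "two_live U"
  shows "reach2 (sim2 A M) w (Return (qs ! k) r U, int j) (Run (qs ! Suc k) r, int (Suc (Suc k)))
    (run_weight k)"
  using assms
proof (induction j arbitrary: U rule: nat_induct_at_least)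
  case base
  show ?case
  proof (rule reach2_sim2_move[where d = DR and p' = "Run (qs ! Suc k) r" and x = "run_weight k"
        and y = 1 and j = "int (Suc (Suc k))"])
    show "sim_move M (Return (qs ! k) r U) (tape w (int (Suc k)))
        = Some (DR, Run (qs ! Suc k) r, run_weight k)"
      using k merges_return_step_start[OF base.prems(2,3)] advance_run[OF k]
      by (simp add: tape_Letter r_def)
    show "valid_sim M (Return (qs ! k) r U)" by (rule valid_sim_Return) (fact base.prems(2))
  qed (use w k reach2.refl in auto)
next
  case (Suc j)
  let ?U' = "return_step M U (w ! j)"
  have j: "Suc k \<le> j" "j < n" using Suc.hyps Suc.prems(1) by simp_all
  have sub: "\<And>s. ?U' s \<subseteq> explore_family j s"
    by (rule return_step_subfamily[OF j Suc.prems(2)])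
  have "\<not> merges ?U'"
    using sub explore_family_disjoint unfolding merges_def by blast
  have "two_live ?U'" using Suc.prems(3) unfolding two_live_def return_step_def by blast
  with j have "reach2 (sim2 A M) w (Return (qs ! k) r ?U', int j)
      (Run (qs ! Suc k) r, int (Suc (Suc k))) (run_weight k)"
    by (intro Suc.IH sub) simp_all
  then show ?case
  proof (rule reach2_sim2_move[where d = DL and p' = "Return (qs ! k) r ?U'" and x = 1
        and y = "run_weight k" and j = "int j"])
    show "sim_move M (Return (qs ! k) r U) (tape w (int (Suc j)))
        = Some (DL, Return (qs ! k) r ?U', 1)"
      using j \<open>\<not> merges ?U'\<close> by (simp add: tape_Letter)
    show "valid_sim M (Return (qs ! k) r U)" by (rule valid_sim_Return) (fact Suc.prems(2))
    show "valid_sim M (Return (qs ! k) r ?U')" by (rule valid_sim_Return) (fact sub)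
  qed (use w j in auto)
qed

lemma reach_run_step:
  "reach2 (sim2 A M) w (Run (qs ! k) S, int (Suc k)) (Run (qs ! Suc k) r, int (Suc (Suc k)))
    (run_weight k)"
proof -
  have tp: "tape w (int (Suc k)) = Letter (w ! k)" using k by (simp add: tape_Letter)
  show ?thesis
  proof (cases "\<exists>s1 s2. s1 \<in> cands \<and> s2 \<in> cands \<and> s1 \<noteq> s2")
    case True
    then have "two_live (explore_family (Suc k))" unfolding explore_family_start two_live_def by auto
    then obtain m where m: "Suc k \<le> m" "m \<le> n" "two_live (explore_family m)"
      "reach2 (sim2 A M) w (Explore (qs ! k) (explore_family (Suc k)), int (Suc (Suc k)))
         (Return (qs ! k) r (explore_family m), int m) 1"
      using reach_explore[of "Suc k"] k by auto
    then have "reach2 (sim2 A M) w (Explore (qs ! k) (explore_family (Suc k)), int (Suc (Suc k)))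
        (Run (qs ! Suc k) r, int (Suc (Suc k))) (1 * run_weight k)"
      using reach2_trans[OF m(4) reach_return[OF m(1,2) _ m(3)]] by simp
    then show ?thesis
    proof (rule reach2_sim2_move[where d = DR and p' = "Explore (qs ! k) (explore_family (Suc k))"
          and x = 1 and j = "int (Suc (Suc k))"])
      show "sim_move M (Run (qs ! k) S) (tape w (int (Suc k)))
          = Some (DR, Explore (qs ! k) (explore_family (Suc k)), 1)"
        using tp True unfolding explore_family_start cands_def by simp
    qed (use w k in auto)
  next
    case False
    then have cands: "cands = {r}" using r_in_cands by blast
    have "\<not> (\<exists>s1 s2. s1 \<in> pre1_candidates M S (w ! k) \<and> s2 \<in> pre1_candidates M S (w ! k)
        \<and> s1 \<noteq> s2)"
      using False unfolding cands_def by simp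
    moreover have "(THE s. pre1_candidates M S (w ! k) = {s}) = r"
      using cands unfolding cands_def by simp
    moreover have "advance M (qs ! k) (w ! k) r = Some (DR, Run (qs ! Suc k) r, run_weight k)"
      using advance_run[OF k] unfolding r_def .
    ultimately have "sim_move M (Run (qs ! k) S) (tape w (int (Suc k)))
        = Some (DR, Run (qs ! Suc k) r, run_weight k)"
      using tp cands unfolding cands_def by simp
    then show ?thesis by (rule reach2_sim2_move[OF reach2.refl]) (use w k in auto)
  qed
qed

end

context unambiguous_run
begin

lemma reach_run:
  assumes "k \<le> n"
  shows "reach2 (sim2 A M) w (Run (qs ! k) (coacc M (drop k w)), int (Suc k))
     (Run (qs ! n) (final_set1 M), int (Suc n)) (prod_list (map run_weight [k..<n]))"
  using assms
proof (induction k rule: inc_induct)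
  case base
  show ?case using reach2.refl by (simp add: coacc_def)
next
  case (step m)
  interpret step: unambiguous_run_step A M w qs m by unfold_locales (use step.hyps in simp)
  have "reach2 (sim2 A M) w (Run (qs ! m) (coacc M (drop m w)), int (Suc m))
     (Run (qs ! n) (final_set1 M), int (Suc n)) (run_weight m * prod_list (map run_weight [Suc m..<n]))"
    by (rule reach2_trans[OF step.reach_run_step[unfolded step.S_def step.r_def] step.IH])
  then show ?case using step.hyps by (simp add: upt_conv_Cons)
qed

lemma reach_accept:
  "reach2 (sim2 A M) w (Forward, 1) (Run (qs ! n) (final_set1 M), int n + 1)
     (the (init1 M (qs ! 0)) * prod_list (map run_weight [0..<n]))"
proof -
  have "reach2 (sim2 A M) w (Run (qs ! 0) (coacc M w), 1) (Run (qs ! n) (final_set1 M), int (Suc n))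
     (prod_list (map run_weight [0..<n]))"
    using reach_run[of 0] by simp
  then have "reach2 (sim2 A M) w (Backward (final_set1 M), int n)
     (Run (qs ! n) (final_set1 M), int (Suc n)) (1 * (the (init1 M (qs ! 0)) * prod_list (map run_weight [0..<n])))"
    using reach2_trans[OF reach_backward[of n] reach2_trans[OF reach_start]] by (simp add: coacc_def)
  then have "reach2 (sim2 A M) w (Forward, int (Suc n)) (Run (qs ! n) (final_set1 M), int (Suc n))
     (the (init1 M (qs ! 0)) * prod_list (map run_weight [0..<n]))"
    by (rule reach2_sim2_move[where d = DL and p' = "Backward (final_set1 M)" and x = 1
          and j = "int n"]) (use w in auto)
  then show ?thesis
    using reach2_trans[OF reach_forward[of 1]] by (simp add: add.commute)
qed

lemma sim2_accepted:
  "finite (comps2 (sim2 A M) w) \<and> weight2 (sim2 A M) w = weight1 M w"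
proof -
  let ?x = "the (init1 M (qs ! 0)) * prod_list (map run_weight [0..<n])"
  have hd_qs: "hd qs = qs ! 0" using run_length by (cases qs) simp_all
  have last_qs: "last qs = qs ! n" using run_length by (subst last_conv_nth) auto
  have "fin1 M (qs ! n) \<noteq> None" using run_fin last_qs by simp
  then have "fin2 (sim2 A M) (Run (qs ! n) (final_set1 M)) = Some (the (fin1 M (qs ! n)))"
    using run_in_states1[of n] unfolding sim2_simps by simp
  moreover have "init2 (sim2 A M) Forward = Some 1" unfolding sim2_simps by simp
  ultimately obtain cs where cs: "cs \<in> comps2 (sim2 A M) w"
    "cweight2 (sim2 A M) w cs = 1 * ?x * the (fin1 M (qs ! n))"
    using reach2_imp_comps2[OF reach_accept wf2_sim2[OF wf]] by blast
  have "comps2 (sim2 A M) w = {cs}"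
    using cs(1) deterministic2_comps2_unique[OF deterministic2_sim2] by blast
  moreover have "comps1 M w = {qs}" using qs comps1_unique by blast
  moreover have "cweight1 M w qs = cweight2 (sim2 A M) w cs"
    unfolding cs(2) cweight1_def run_weight_def hd_qs last_qs by (simp add: mult.assoc)
  ultimately show ?thesis unfolding weight2_def weight1_def by simp
qed

end

section \<open>Words rejected by the one-way automaton\<close>

text \<open>Without an accepting computation of M no initial state is co-accessible at the left
  end-marker, so the simulation never leaves its two initial sweeps and never accepts.\<close>

definition scan_config :: "('p, 'a, 'k) oneway \<Rightarrow> 'a list \<Rightarrow> 'p sim_state \<times> int \<Rightarrow> bool" where
  "scan_config M w c \<longleftrightarrow> (fst c = Forward \<and> 1 \<le> snd c \<and> snd c \<le> int (length w) + 1)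
     \<or> (\<exists>k \<le> length w. c = (Backward (coacc M (drop k w)), int k))"

lemma scan_config_step:
  assumes "wf1 A M" "comps1 M w = {}" "scan_config M w c"
    "trans2 (sim2 A M) (fst c) (tape w (snd c)) d p \<noteq> None"
  shows "scan_config M w (p, snd c + dval d)"
proof -
  obtain x where move: "sim_move M (fst c) (tape w (snd c)) = Some (d, p, x)"
    using trans2_sim2_imp_sim_move[OF assms(4)] by blast
  show ?thesis
  proof (cases "fst c = Forward")
    case fwd: True
    then have pos: "1 \<le> snd c" "snd c \<le> int (length w) + 1"
      using assms(3) unfolding scan_config_def by auto
    show ?thesis
    proof (cases "snd c = int (length w) + 1")
      case True
      then show ?thesis using move fwd unfolding scan_config_def
        by (intro disjI2 exI[of _ "length w"]) (simp add: coacc_def)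
    next
      case False
      define m where "m = nat (snd c - 1)"
      have "snd c = int (Suc m)" "m < length w" using pos False unfolding m_def by auto
      then show ?thesis using move fwd pos unfolding scan_config_def by (auto simp: tape_Letter)
    qed
  next
    case False
    then obtain k where k: "k \<le> length w" "c = (Backward (coacc M (drop k w)), int k)"
      using assms(3) unfolding scan_config_def by auto
    have "\<not> (\<exists>!q. init1 M q \<noteq> None \<and> q \<in> coacc M w)"
      using init_notin_coacc[OF assms(1,2)] by blast
    then show ?thesis
      using move k unfolding scan_config_def
      by (cases k) (auto simp: tape_Letter coacc_drop split: if_splits)
  qed
qed

lemma sim2_rejected:
  assumes "wf1 A M" "comps1 M w = {}"
  shows "comps2 (sim2 A M) w = {}"
proof (rule ccontr)
  assume "comps2 (sim2 A M) w \<noteq> {}"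
  then obtain cs where cs: "cs \<in> comps2 (sim2 A M) w" by blast
  then have ne: "cs \<noteq> []" and mv: "moves2 (sim2 A M) w cs" and pos: "snd (hd cs) = 1"
    and init: "init2 (sim2 A M) (fst (hd cs)) \<noteq> None"
    and fin: "fin2 (sim2 A M) (fst (last cs)) \<noteq> None"
    unfolding comps2_iff by blast+
  have "fst (hd cs) = Forward" using init by (simp add: sim2_simps split: if_splits)
  then have "scan_config M w (hd cs)" using pos by (simp add: scan_config_def)
  then have "scan_config M w (last cs)"
    using moves2_last_invariant[OF mv ne, where P = "scan_config M w"] scan_config_step[OF assms]
    by blast
  moreover have "fin2 (sim2 A M) Forward = None" "fin2 (sim2 A M) (Backward S) = None" for S
    by (simp_all add: sim2_simps)
  ultimately show False using fin unfolding scan_config_def by auto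
qed

theorem mainTheorem5:
  fixes A :: "'a set"
    and M :: "('p, 'a, 'k::{semiring_0, monoid_mult}) oneway"
  assumes "finite A"
    and "wf1 A M"
    and "unambiguous1 A M"
  shows "\<exists>B :: (nat, 'a, 'k) twoway. wf2 A B \<and> deterministic2 B
           \<and> (\<forall>w \<in> lists A. finite (comps2 B w) \<and> weight2 B w = weight1 M w)"
proof -
  let ?B = "sim2 A M"
  have wf: "wf2 A ?B" using wf2_sim2[OF assms(2)] .
  have correct: "finite (comps2 ?B w) \<and> weight2 ?B w = weight1 M w" if w: "w \<in> lists A" for w
  proof (cases "comps1 M w = {}")
    case True
    then show ?thesis using sim2_rejected[OF assms(2)] unfolding weight2_def weight1_def by simp
  next
    case False
    then obtain qs where "qs \<in> comps1 M w" by blast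
    then interpret unambiguous_run A M w qs by unfold_locales (use assms(2,3) w in auto)
    show ?thesis by (rule sim2_accepted)
  qed
  obtain f :: "'p sim_state \<Rightarrow> nat" where "inj_on f (states2 ?B)"
    using wf finite_imp_inj_to_nat_seg unfolding wf2_def by meson
  then show ?thesis
    using wf correct deterministic2_rename2[OF deterministic2_sim2]
    by (intro exI[of _ "rename2 f ?B"]) (simp add: wf2_rename2 comps2_rename2 weight2_rename2)
qed

end
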